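(* Let $X\in G$, let $(s_1,\ldots,s_k)$ be an oriented path in $\Gamma_X$ starting at a vertex $Y$, and let $\alpha=s_1\cdots s_k\in P$. (1) If $\alpha\preccurlyeq Y^\circ$, then $(s_1,\ldots,s_k)$ is an oriented black path. (2) If $\alpha\preccurlyeq (Y^{-1})^\circ$, then $(s_1,\ldots,s_k)$ is an oriented grey path.
   Context: $G$ is a Garside group: it has a lattice order $\preccurlyeq$ invariant under left multiplication ($a\preccurlyeq b$ iff $a^{-1}b\in P$, where $P=\{p\in G:1\preccurlyeq p\}$), with meet $\wedge$; there is a Garside element $\Delta\in P$ such that $[1,\Delta]$ is finite and generates $G$ and $\Delta^{-1}P\Delta=P$; and $P$ is atomic. Elements of $[1,\Delta]$ are simple. $\tau(x)=\Delta^{-1}x\Delta$; $X^a=a^{-1}Xa$. Left normal form $X=\Delta^p x_1\cdots x_r$: $p$ maximal with $\Delta^p\preccurlyeq X$, each $x_i\neq 1$ the maximal simple prefix of $x_i\cdots x_r$; $\inf X=p$, $\sup X=p+r$. $\iota(X)=\tau^{-p}(x_1)$ if $r>0$, $\iota(\Delta^p)=1$. $Y^\circ=Y\Delta^{-\inf Y}$. $\mathbf c(X)=X^{\iota(X)}$. $SSS(X)$: conjugates of $X$ of maximal infimum and minimal supremum; $USS(X)$: those $Y\in SSS(X)$ with $\mathbf c^m(Y)=Y$ for some $m>0$. A minimal simple element for $Y\in USS(X)$ is a simple $s\neq1$ with $Y^s\in USS(X)$ such that no prefix $t\ne1$, $t\neq s$ of $s$ has $Y^t\in USS(X)$. $\Gamma_X$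 is the directed graph with vertex set $USS(X)$ and an arrow labeled $s$ from $Y$ to $Y^s$ for each $Y\in USS(X)$ and each minimal simple element $s$ for $Y$. An arrow $s$ starting at $Y$ is black if $s\preccurlyeq\iota(Y)$ and grey if $s\preccurlyeq\iota(Y^{-1})$ (it may be both). An oriented path is a sequence of arrows $(s_1,\ldots,s_k)$, each starting at the endpoint of the previous one; it is black (grey) if all its arrows are black (grey). *)

theory Defs
  imports "HOL-Algebra.Generated_Groups"
begin

text \<open>A Garside group is given by a group G, its positive monoid P and a Garside
element Delta. All notions are parametrised explicitly by (G, P, Delta).\<close>

definition prec :: "('a, 'b) monoid_scheme \<Rightarrow> 'a set \<Rightarrow> 'a \<Rightarrow> 'a \<Rightarrow> bool" where
  "prec G P a b \<longleftrightarrow> a \<in> carrier G \<and> b \<in> carrier G \<and> inv\<^bsub>G\<^esub> a \<otimes>\<^bsub>G\<^esub> b \<in> P"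

definition list_prod :: "('a, 'b) monoid_scheme \<Rightarrow> 'a list \<Rightarrow> 'a" where
  "list_prod G xs = foldr (\<lambda>x acc. x \<otimes>\<^bsub>G\<^esub> acc) xs \<one>\<^bsub>G\<^esub>"

definition is_glb :: "('a, 'b) monoid_scheme \<Rightarrow> 'a set \<Rightarrow> 'a \<Rightarrow> 'a \<Rightarrow> 'a \<Rightarrow> bool" where
  "is_glb G P a b m \<longleftrightarrow> prec G P m a \<and> prec G P m b \<and>
     (\<forall>c. prec G P c a \<and> prec G P c b \<longrightarrow> prec G P c m)"

definition is_lub :: "('a, 'b) monoid_scheme \<Rightarrow> 'a set \<Rightarrow> 'a \<Rightarrow> 'a \<Rightarrow> 'a \<Rightarrow> bool" where
  "is_lub G P a b j \<longleftrightarrow> prec G P a j \<and> prec G P b j \<and>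
     (\<forall>c. prec G P a c \<and> prec G P b c \<longrightarrow> prec G P j c)"

definition simples :: "('a, 'b) monoid_scheme \<Rightarrow> 'a set \<Rightarrow> 'a \<Rightarrow> 'a set" where
  "simples G P \<Delta> = {s. prec G P \<one>\<^bsub>G\<^esub> s \<and> prec G P s \<Delta>}"

definition atomic :: "('a, 'b) monoid_scheme \<Rightarrow> 'a set \<Rightarrow> bool" where
  "atomic G P \<longleftrightarrow> (\<forall>x\<in>P. \<exists>N::nat. \<forall>xs. set xs \<subseteq> P - {\<one>\<^bsub>G\<^esub>} \<and> list_prod G xs = x
       \<longrightarrow> length xs \<le> N)"

definition garside :: "('a, 'b) monoid_scheme \<Rightarrow> 'a set \<Rightarrow> 'a \<Rightarrow> bool" where
  "garside G P \<Delta> \<longleftrightarrow>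
     group G \<and>
     P \<subseteq> carrier G \<and> \<one>\<^bsub>G\<^esub> \<in> P \<and>
     (\<forall>a\<in>P. \<forall>b\<in>P. a \<otimes>\<^bsub>G\<^esub> b \<in> P) \<and>
     (\<forall>a\<in>P. inv\<^bsub>G\<^esub> a \<in> P \<longrightarrow> a = \<one>\<^bsub>G\<^esub>) \<and>
     (\<forall>a\<in>carrier G. \<forall>b\<in>carrier G. (\<exists>m. is_glb G P a b m) \<and> (\<exists>j. is_lub G P a b j)) \<and>
     \<Delta> \<in> P \<and>
     finite (simples G P \<Delta>) \<and>
     generate G (simples G P \<Delta>) = carrier G \<and>
     (\<lambda>p. inv\<^bsub>G\<^esub> \<Delta> \<otimes>\<^bsub>G\<^esub> p \<otimes>\<^bsub>G\<^esub> \<Delta>) ` P = P \<and>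
     atomic G P"

definition conj :: "('a, 'b) monoid_scheme \<Rightarrow> 'a \<Rightarrow> 'a \<Rightarrow> 'a" where
  "conj G X a = inv\<^bsub>G\<^esub> a \<otimes>\<^bsub>G\<^esub> X \<otimes>\<^bsub>G\<^esub> a"

definition tau_pow :: "('a, 'b) monoid_scheme \<Rightarrow> 'a \<Rightarrow> int \<Rightarrow> 'a \<Rightarrow> 'a" where
  "tau_pow G \<Delta> k x = conj G x (\<Delta> [^]\<^bsub>G\<^esub> k)"

definition ginf :: "('a, 'b) monoid_scheme \<Rightarrow> 'a set \<Rightarrow> 'a \<Rightarrow> 'a \<Rightarrow> int" where
  "ginf G P \<Delta> X = (GREATEST p::int. prec G P (\<Delta> [^]\<^bsub>G\<^esub> p) X)"

definition is_lnf :: "('a, 'b) monoid_scheme \<Rightarrow> 'a set \<Rightarrow> 'a \<Rightarrow> 'a \<Rightarrow> int \<Rightarrow> 'a list \<Rightarrow> bool" where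
  "is_lnf G P \<Delta> X p xs \<longleftrightarrow>
     p = ginf G P \<Delta> X \<and>
     X = (\<Delta> [^]\<^bsub>G\<^esub> p) \<otimes>\<^bsub>G\<^esub> list_prod G xs \<and>
     (\<forall>i<length xs. xs ! i \<noteq> \<one>\<^bsub>G\<^esub> \<and>
        xs ! i \<in> simples G P \<Delta> \<and> prec G P (xs ! i) (list_prod G (drop i xs)) \<and>
        (\<forall>s\<in>simples G P \<Delta>. prec G P s (list_prod G (drop i xs)) \<longrightarrow> prec G P s (xs ! i)))"

definition lnf_factors :: "('a, 'b) monoid_scheme \<Rightarrow> 'a set \<Rightarrow> 'a \<Rightarrow> 'a \<Rightarrow> 'a list" where
  "lnf_factors G P \<Delta> X = (THE xs. is_lnf G P \<Delta> X (ginf G P \<Delta> X) xs)"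

definition gsup :: "('a, 'b) monoid_scheme \<Rightarrow> 'a set \<Rightarrow> 'a \<Rightarrow> 'a \<Rightarrow> int" where
  "gsup G P \<Delta> X = ginf G P \<Delta> X + int (length (lnf_factors G P \<Delta> X))"

definition iota :: "('a, 'b) monoid_scheme \<Rightarrow> 'a set \<Rightarrow> 'a \<Rightarrow> 'a \<Rightarrow> 'a" where
  "iota G P \<Delta> X =
     (if lnf_factors G P \<Delta> X = [] then \<one>\<^bsub>G\<^esub>
      else tau_pow G \<Delta> (- ginf G P \<Delta> X) (hd (lnf_factors G P \<Delta> X)))"

definition circ :: "('a, 'b) monoid_scheme \<Rightarrow> 'a set \<Rightarrow> 'a \<Rightarrow> 'a \<Rightarrow> 'a" where
  "circ G P \<Delta> Y = Y \<otimes>\<^bsub>G\<^esub> (\<Delta> [^]\<^bsub>G\<^esub> (- ginf G P \<Delta> Y))"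

definition cycling :: "('a, 'b) monoid_scheme \<Rightarrow> 'a set \<Rightarrow> 'a \<Rightarrow> 'a \<Rightarrow> 'a" where
  "cycling G P \<Delta> X = conj G X (iota G P \<Delta> X)"

definition conjugates :: "('a, 'b) monoid_scheme \<Rightarrow> 'a \<Rightarrow> 'a set" where
  "conjugates G X = {conj G X a | a. a \<in> carrier G}"

definition SSS :: "('a, 'b) monoid_scheme \<Rightarrow> 'a set \<Rightarrow> 'a \<Rightarrow> 'a \<Rightarrow> 'a set" where
  "SSS G P \<Delta> X = {Y \<in> conjugates G X. \<forall>Z\<in>conjugates G X.
       ginf G P \<Delta> Z \<le> ginf G P \<Delta> Y \<and> gsup G P \<Delta> Y \<le> gsup G P \<Delta> Z}"

definition USS :: "('a, 'b) monoid_scheme \<Rightarrow> 'a set \<Rightarrow> 'a \<Rightarrow> 'a \<Rightarrow> 'a set" where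
  "USS G P \<Delta> X = {Y \<in> SSS G P \<Delta> X. \<exists>m>0. (cycling G P \<Delta> ^^ m) Y = Y}"

definition minimal_simple :: "('a, 'b) monoid_scheme \<Rightarrow> 'a set \<Rightarrow> 'a \<Rightarrow> 'a \<Rightarrow> 'a \<Rightarrow> 'a \<Rightarrow> bool" where
  "minimal_simple G P \<Delta> X Y s \<longleftrightarrow>
     s \<in> simples G P \<Delta> \<and> s \<noteq> \<one>\<^bsub>G\<^esub> \<and> conj G Y s \<in> USS G P \<Delta> X \<and>
     (\<forall>t. prec G P \<one>\<^bsub>G\<^esub> t \<and> prec G P t s \<and> t \<noteq> \<one>\<^bsub>G\<^esub> \<and> t \<noteq> s
        \<longrightarrow> conj G Y t \<notin> USS G P \<Delta> X)"

fun oriented_path :: "('a, 'b) monoid_scheme \<Rightarrow> 'a set \<Rightarrow> 'a \<Rightarrow> 'a \<Rightarrow> 'a \<Rightarrow> 'a list \<Rightarrow> bool" where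
  "oriented_path G P \<Delta> X Y [] \<longleftrightarrow> Y \<in> USS G P \<Delta> X"
| "oriented_path G P \<Delta> X Y (s # ss) \<longleftrightarrow> Y \<in> USS G P \<Delta> X \<and> minimal_simple G P \<Delta> X Y s \<and>
     oriented_path G P \<Delta> X (conj G Y s) ss"

fun black_path :: "('a, 'b) monoid_scheme \<Rightarrow> 'a set \<Rightarrow> 'a \<Rightarrow> 'a \<Rightarrow> 'a list \<Rightarrow> bool" where
  "black_path G P \<Delta> Y [] \<longleftrightarrow> True"
| "black_path G P \<Delta> Y (s # ss) \<longleftrightarrow> prec G P s (iota G P \<Delta> Y) \<and> black_path G P \<Delta> (conj G Y s) ss"

fun grey_path :: "('a, 'b) monoid_scheme \<Rightarrow> 'a set \<Rightarrow> 'a \<Rightarrow> 'a \<Rightarrow> 'a list \<Rightarrow> bool" where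
  "grey_path G P \<Delta> Y [] \<longleftrightarrow> True"
| "grey_path G P \<Delta> Y (s # ss) \<longleftrightarrow> prec G P s (iota G P \<Delta> (inv\<^bsub>G\<^esub> Y)) \<and> grey_path G P \<Delta> (conj G Y s) ss"

end

theory Submission
  imports Defs
begin

text \<open>
  Let \<open>s\<close> be an arrow from \<open>Y\<close> and \<open>b\<close> the product of the rest of the path. Both ends of the
  arrow lie in the ultra summit set, so \<open>Y\<^sup>s\<close> has the same infimum \<open>p\<close> and supremum as \<open>Y\<close>,
  and then \<open>(Y\<^sup>s)\<^sup>\<circ> = s\<^sup>-\<^sup>1 Y\<^sup>\<circ> \<tau>\<^sup>-\<^sup>p(s)\<close>. Hence \<open>s b \<preceq> Y\<^sup>\<circ>\<close> gives \<open>b \<preceq> (Y\<^sup>s)\<^sup>\<circ>\<close>, and induction along the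
  path leaves a single arrow to check: a nontrivial simple prefix \<open>s\<close> of
  \<open>Y\<^sup>\<circ> = \<tau>\<^sup>-\<^sup>p(x\<^sub>1 \<cdots> x\<^sub>r)\<close> is a prefix of \<open>\<tau>\<^sup>-\<^sup>p(x\<^sub>1) = \<iota>(Y)\<close>, since \<open>x\<^sub>1\<close> is the largest simple prefix
  of \<open>x\<^sub>1 \<cdots> x\<^sub>r\<close>. The grey case is the same argument for \<open>Y\<^sup>-\<^sup>1\<close>, whose infimum \<open>-sup(Y)\<close>
  is constant on the ultra summit set as well.

  The substance lies in the greedy normal form behind \<open>\<iota>\<close>, \<open>inf\<close> and \<open>sup\<close>; in particular
  \<open>inf(Y\<^sup>-\<^sup>1) = -sup(Y)\<close> rests on \<open>x\<^sub>1 \<cdots> x\<^sub>r \<preceq> \<Delta>\<^sup>k \<longleftrightarrow> r \<le> k\<close> for a left normal form \<open>x\<^sub>1 \<cdots> x\<^sub>r\<close>.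
\<close>

lemma ex_has_greatest_int:
  fixes Q :: "int \<Rightarrow> bool"
  assumes "Q k" and "\<And>y. Q y \<Longrightarrow> y \<le> b"
  shows "\<exists>x. Q x \<and> (\<forall>y. Q y \<longrightarrow> y \<le> x)"
proof -
  obtain n where n: "Q (k + int n)" "\<And>m. Q (k + int m) \<Longrightarrow> m \<le> n"
    using Nat.ex_has_greatest_nat[where P="\<lambda>m. Q (k + int m)" and k=0 and b="nat (b - k)"] assms
    by fastforce
  have "y \<le> k + int n" if "Q y" for y
  proof (cases "y \<le> k")
    case False
    then have "Q (k + int (nat (y - k)))" using that by simp
    then show ?thesis using n(2) by fastforce
  qed simp
  then show ?thesis using n(1) by blast
qed

lemma GreatestI_int:
  fixes Q :: "int \<Rightarrow> bool"
  assumes "Q k" and "\<And>y. Q y \<Longrightarrow> y \<le> b"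
  shows "Q (Greatest Q)"
proof -
  obtain x where "Q x" "\<And>y. Q y \<Longrightarrow> y \<le> x"
    using ex_has_greatest_int assms by blast
  then show "Q (Greatest Q)"
    using GreatestI2_order by blast
qed

lemma list_prod_Nil [simp]: "list_prod G [] = \<one>\<^bsub>G\<^esub>"
  by (simp add: list_prod_def)

lemma list_prod_Cons [simp]: "list_prod G (x # xs) = x \<otimes>\<^bsub>G\<^esub> list_prod G xs"
  by (simp add: list_prod_def)

context group
begin

lemma mult_inv_cancel_left [simp]: "x \<in> carrier G \<Longrightarrow> y \<in> carrier G \<Longrightarrow> x \<otimes> (inv x \<otimes> y) = y"
  by (simp add: m_assoc[symmetric])

lemma inv_mult_cancel_left [simp]: "x \<in> carrier G \<Longrightarrow> y \<in> carrier G \<Longrightarrow> inv x \<otimes> (x \<otimes> y) = y"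
  by (simp add: m_assoc[symmetric])

lemma list_prod_closed [simp]: "set xs \<subseteq> carrier G \<Longrightarrow> list_prod G xs \<in> carrier G"
  by (induction xs) auto

lemma list_prod_append:
  "set xs \<subseteq> carrier G \<Longrightarrow> set ys \<subseteq> carrier G \<Longrightarrow> list_prod G (xs @ ys) = list_prod G xs \<otimes> list_prod G ys"
  by (induction xs) (auto simp: m_assoc)

lemma conj_closed [simp]: "x \<in> carrier G \<Longrightarrow> c \<in> carrier G \<Longrightarrow> conj G x c \<in> carrier G"
  by (simp add: conj_def)

lemma conj_one [simp]: "c \<in> carrier G \<Longrightarrow> conj G \<one> c = \<one>"
  by (simp add: conj_def)

lemma conj_by_one [simp]: "x \<in> carrier G \<Longrightarrow> conj G x \<one> = x"
  by (simp add: conj_def)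

lemma conj_mult:
  "x \<in> carrier G \<Longrightarrow> y \<in> carrier G \<Longrightarrow> c \<in> carrier G \<Longrightarrow> conj G (x \<otimes> y) c = conj G x c \<otimes> conj G y c"
  by (simp add: conj_def m_assoc)

lemma conj_inv: "x \<in> carrier G \<Longrightarrow> c \<in> carrier G \<Longrightarrow> conj G (inv x) c = inv (conj G x c)"
  by (simp add: conj_def m_assoc inv_mult_group)

lemma conj_conj:
  "x \<in> carrier G \<Longrightarrow> a \<in> carrier G \<Longrightarrow> b \<in> carrier G \<Longrightarrow> conj G (conj G x a) b = conj G x (a \<otimes> b)"
  by (simp add: conj_def m_assoc inv_mult_group)

lemma list_prod_conj:
  "set xs \<subseteq> carrier G \<Longrightarrow> c \<in> carrier G \<Longrightarrow>
    list_prod G (map (\<lambda>x. conj G x c) xs) = conj G (list_prod G xs) c"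
  by (induction xs) (auto simp: conj_mult)

end

locale garside_group = group G for G :: "('a, 'b) monoid_scheme" (structure) +
  fixes P :: "'a set" and \<Delta> :: 'a
  assumes garside: "garside G P \<Delta>"
begin

abbreviation prefix_le :: "'a \<Rightarrow> 'a \<Rightarrow> bool" (infix \<open>\<preceq>\<close> 50)
  where "a \<preceq> b \<equiv> prec G P a b"

abbreviation S :: "'a set"
  where "S \<equiv> simples G P \<Delta>"

abbreviation \<tau> :: "int \<Rightarrow> 'a \<Rightarrow> 'a"
  where "\<tau> k x \<equiv> conj G x (\<Delta> [^] k)"

abbreviation complement :: "'a \<Rightarrow> 'a" (\<open>\<partial>\<close>)
  where "\<partial> s \<equiv> inv s \<otimes> \<Delta>"

lemma positive_subset_carrier: "P \<subseteq> carrier G"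
  and one_positive [simp]: "\<one> \<in> P"
  and positive_mult: "a \<in> P \<Longrightarrow> b \<in> P \<Longrightarrow> a \<otimes> b \<in> P"
  and positive_antisym: "a \<in> P \<Longrightarrow> inv a \<in> P \<Longrightarrow> a = \<one>"
  and glb_lub_exist: "a \<in> carrier G \<Longrightarrow> b \<in> carrier G \<Longrightarrow> (\<exists>m. is_glb G P a b m) \<and> (\<exists>j. is_lub G P a b j)"
  and Delta_positive: "\<Delta> \<in> P"
  and generate_simples: "generate G S = carrier G"
  and tau_image_positive: "(\<lambda>p. inv \<Delta> \<otimes> p \<otimes> \<Delta>) ` P = P"
  using garside unfolding garside_def by auto

lemma positive_closed [simp]: "p \<in> P \<Longrightarrow> p \<in> carrier G"
  using positive_subset_carrier by blast

lemma Delta_closed [simp]: "\<Delta> \<in> carrier G"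
  using Delta_positive by simp

subsection \<open>The prefix order and simple elements\<close>

lemma prefix_iff: "a \<preceq> b \<longleftrightarrow> a \<in> carrier G \<and> b \<in> carrier G \<and> inv a \<otimes> b \<in> P"
  by (simp add: prec_def)

lemma prefix_closed:
  assumes "a \<preceq> b" shows "a \<in> carrier G" and "b \<in> carrier G"
  using assms by (simp_all add: prefix_iff)

lemma prefix_refl: "a \<in> carrier G \<Longrightarrow> a \<preceq> a"
  by (simp add: prefix_iff)

lemma prefix_trans [trans]:
  assumes "a \<preceq> b" and "b \<preceq> c" shows "a \<preceq> c"
proof -
  have "inv a \<otimes> c = (inv a \<otimes> b) \<otimes> (inv b \<otimes> c)"
    using assms by (simp add: prefix_iff m_assoc)
  then show ?thesis
    using assms by (simp add: prefix_iff positive_mult)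
qed

lemma prefix_antisym:
  assumes "a \<preceq> b" and "b \<preceq> a" shows "a = b"
proof -
  have "inv (inv a \<otimes> b) = inv b \<otimes> a"
    using assms by (simp add: prefix_iff inv_mult_group)
  then have "inv a \<otimes> b = \<one>"
    using assms positive_antisym by (simp add: prefix_iff)
  then have "a \<otimes> (inv a \<otimes> b) = a"
    using assms by (simp add: prefix_iff)
  then show ?thesis
    using assms by (simp add: prefix_iff)
qed

lemma prefix_mult_left_iff:
  "c \<in> carrier G \<Longrightarrow> a \<in> carrier G \<Longrightarrow> b \<in> carrier G \<Longrightarrow> c \<otimes> a \<preceq> c \<otimes> b \<longleftrightarrow> a \<preceq> b"
  by (simp add: prefix_iff inv_mult_group m_assoc)

lemma prefix_mult_left: "a \<preceq> b \<Longrightarrow> c \<in> carrier G \<Longrightarrow> c \<otimes> a \<preceq> c \<otimes> b"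
  using prefix_mult_left_iff prefix_closed by blast

lemma one_prefix_iff [simp]: "\<one> \<preceq> a \<longleftrightarrow> a \<in> P"
  by (auto simp: prefix_iff)

lemma prefix_mult_right: "a \<in> carrier G \<Longrightarrow> p \<in> P \<Longrightarrow> a \<preceq> a \<otimes> p"
  by (simp add: prefix_iff m_assoc[symmetric])

lemma prefixE:
  assumes "a \<preceq> b"
  obtains p where "p \<in> P" and "b = a \<otimes> p"
  using assms by (auto simp: prefix_iff m_assoc[symmetric])

lemma positive_prefix_one: "a \<in> P \<Longrightarrow> a \<preceq> \<one> \<Longrightarrow> a = \<one>"
  using positive_antisym by (simp add: prefix_iff)

lemma tau_tau: "x \<in> carrier G \<Longrightarrow> \<tau> k (\<tau> l x) = \<tau> (l + k) x"
  by (simp add: conj_conj int_pow_mult)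

lemma tau_inverse [simp]: "x \<in> carrier G \<Longrightarrow> \<tau> (- k) (\<tau> k x) = x"
  by (simp add: tau_tau)

lemma tau_positive:
  assumes "p \<in> P" shows "\<tau> k p \<in> P"
proof -
  have forward: "\<tau> 1 q \<in> P" if "q \<in> P" for q
    using that tau_image_positive by (auto simp: conj_def)
  have backward: "\<tau> (- 1) q \<in> P" if "q \<in> P" for q
  proof -
    obtain r where "r \<in> P" "q = \<tau> 1 r"
      using \<open>q \<in> P\<close> tau_image_positive by (auto simp: conj_def)
    then show ?thesis
      using tau_inverse[of r 1] by simp
  qed
  show ?thesis
  proof (induction k rule: int_induct[where k = 0])
    case (step1 i)
    then show ?case
      using forward[of "\<tau> i p"] assms by (simp add: conj_conj int_pow_mult)
  next
    case (step2 i)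
    then show ?case
      using backward[of "\<tau> i p"] assms by (simp add: conj_conj int_pow_diff int_pow_neg)
  qed (use assms in simp)
qed

lemma tau_Delta [simp]: "\<tau> k \<Delta> = \<Delta>"
proof -
  have "\<Delta> \<otimes> \<Delta> [^] k = \<Delta> [^] k \<otimes> \<Delta>"
    using int_pow_mult[of \<Delta> 1 k] int_pow_mult[of \<Delta> k 1] by (simp add: add.commute)
  then show ?thesis
    by (simp add: conj_def m_assoc)
qed

lemma tau_prefix: "a \<preceq> b \<Longrightarrow> \<tau> k a \<preceq> \<tau> k b"
  by (simp add: prefix_iff conj_inv[symmetric] conj_mult[symmetric] tau_positive)

lemma tau_prefix_iff: "a \<in> carrier G \<Longrightarrow> b \<in> carrier G \<Longrightarrow> \<tau> k a \<preceq> \<tau> k b \<longleftrightarrow> a \<preceq> b"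
  using tau_prefix[of "\<tau> k a" "\<tau> k b" "- k"] tau_prefix[of a b k] by auto

lemma prefix_tau_iff: "v \<in> carrier G \<Longrightarrow> a \<in> carrier G \<Longrightarrow> v \<preceq> \<tau> k a \<longleftrightarrow> \<tau> (- k) v \<preceq> a"
  using tau_prefix_iff[of v "\<tau> k a" "- k"] by simp

lemma tau_positive_iff: "x \<in> carrier G \<Longrightarrow> \<tau> k x \<in> P \<longleftrightarrow> x \<in> P"
  using tau_positive[of "\<tau> k x" "- k"] tau_positive[of x k] by auto

lemma simple_iff: "s \<in> S \<longleftrightarrow> s \<in> P \<and> \<partial> s \<in> P"
  by (auto simp: simples_def prefix_iff)

lemma simpleI: "s \<in> P \<Longrightarrow> s \<preceq> \<Delta> \<Longrightarrow> s \<in> S"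
  by (simp add: simples_def)

lemma simple_positive: "s \<in> S \<Longrightarrow> s \<in> P"
  by (simp add: simple_iff)

lemma simple_closed [simp]: "s \<in> S \<Longrightarrow> s \<in> carrier G"
  by (simp add: simple_iff)

lemma simples_subset_carrier: "S \<subseteq> carrier G"
  by auto

lemma simple_prefix_Delta: "s \<in> S \<Longrightarrow> s \<preceq> \<Delta>"
  by (simp add: simples_def)

lemma Delta_simple [simp]: "\<Delta> \<in> S"
  by (simp add: simple_iff Delta_positive)

lemma tau_simple: "s \<in> S \<Longrightarrow> \<tau> k s \<in> S"
  using tau_prefix[of s \<Delta> k] by (simp add: simple_iff tau_positive prefix_iff)

lemma complement_simple: "s \<in> S \<Longrightarrow> \<partial> s \<in> S"
  using tau_positive[of s 1] by (simp add: simple_iff inv_mult_group m_assoc conj_def)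

lemma complement_complement: "s \<in> carrier G \<Longrightarrow> \<partial> (\<partial> s) = \<tau> 1 s"
  by (simp add: inv_mult_group m_assoc conj_def)

lemma simple_suffix:
  assumes "c \<in> P" and "c \<preceq> t" and "t \<in> S"
  shows "inv c \<otimes> t \<in> S"
proof -
  have "\<partial> (inv c \<otimes> t) = \<partial> t \<otimes> \<tau> 1 c"
    using assms by (simp add: inv_mult_group m_assoc conj_def)
  then show ?thesis
    using assms tau_positive[of c 1] by (simp add: simple_iff prefix_iff positive_mult)
qed

lemma Delta_prefix_mult_Delta:
  assumes "a \<in> P" shows "\<Delta> \<preceq> a \<otimes> \<Delta>"
proof -
  have "a \<otimes> \<Delta> = \<Delta> \<otimes> \<tau> 1 a"
    using assms by (simp add: conj_def m_assoc[symmetric])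
  then show ?thesis
    using assms tau_positive[of a 1] by (simp add: prefix_mult_right)
qed

lemma Delta_neq_one_if_simple: "s \<in> S \<Longrightarrow> s \<noteq> \<one> \<Longrightarrow> \<Delta> \<noteq> \<one>"
  using positive_prefix_one simple_positive simple_prefix_Delta by blast

subsection \<open>Heads\<close>

lemma lubE:
  assumes "a \<in> carrier G" and "b \<in> carrier G"
  obtains j where "a \<preceq> j" and "b \<preceq> j" and "\<And>c. a \<preceq> c \<Longrightarrow> b \<preceq> c \<Longrightarrow> j \<preceq> c"
  using glb_lub_exist[OF assms] unfolding is_lub_def by blast

lemma glbE:
  assumes "a \<in> carrier G" and "b \<in> carrier G"
  obtains m where "m \<preceq> a" and "m \<preceq> b" and "\<And>c. c \<preceq> a \<Longrightarrow> c \<preceq> b \<Longrightarrow> c \<preceq> m"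
  using glb_lub_exist[OF assms] unfolding is_glb_def by blast

definition is_head :: "'a \<Rightarrow> 'a \<Rightarrow> bool"
  where "is_head a h \<longleftrightarrow> h \<in> S \<and> h \<preceq> a \<and> (\<forall>v\<in>S. v \<preceq> a \<longrightarrow> v \<preceq> h)"

lemma head_exists:
  assumes "a \<in> P" obtains h where "is_head a h"
proof -
  obtain m where m: "m \<preceq> \<Delta>" "m \<preceq> a" "\<And>c. c \<preceq> \<Delta> \<Longrightarrow> c \<preceq> a \<Longrightarrow> c \<preceq> m"
    using glbE[of \<Delta> a] assms by auto
  have "m \<in> S"
    using m m(3)[of \<one>] assms Delta_positive by (simp add: simples_def)
  then show ?thesis
    using m that simple_prefix_Delta unfolding is_head_def by blast
qed

lemma head_unique: "is_head a h \<Longrightarrow> is_head a h' \<Longrightarrow> h = h'"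
  unfolding is_head_def using prefix_antisym by blast

lemma is_head_simple: "s \<in> S \<Longrightarrow> is_head s s"
  unfolding is_head_def using prefix_refl by auto

lemma simple_prefix_mult_head:
  assumes a: "a \<in> P" and b: "b \<in> P" and u: "u \<in> S" and c: "c \<in> carrier G"
    and head_le: "\<And>v. v \<in> S \<Longrightarrow> v \<preceq> b \<Longrightarrow> v \<preceq> c" and u_le: "u \<preceq> a \<otimes> b"
  shows "u \<preceq> a \<otimes> c"
proof -
  obtain j where j: "a \<preceq> j" "u \<preceq> j" "\<And>x. a \<preceq> x \<Longrightarrow> u \<preceq> x \<Longrightarrow> j \<preceq> x"
    using lubE[of a u] a u by auto
  obtain d where d: "d \<in> P" "j = a \<otimes> d"
    using prefixE[OF j(1)] by blast
  have "j \<preceq> a \<otimes> b"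
    using j a b u_le by (simp add: prefix_mult_right)
  then have "d \<preceq> b"
    using a b d by (simp add: prefix_mult_left_iff)
  moreover have "j \<preceq> a \<otimes> \<Delta>"
  proof (rule j(3))
    show "a \<preceq> a \<otimes> \<Delta>"
      using a Delta_positive by (simp add: prefix_mult_right)
    show "u \<preceq> a \<otimes> \<Delta>"
      using simple_prefix_Delta[OF u] Delta_prefix_mult_Delta[OF a] by (rule prefix_trans)
  qed
  then have "d \<preceq> \<Delta>"
    using a d by (simp add: prefix_mult_left_iff)
  ultimately have "d \<preceq> c"
    using d head_le simpleI by blast
  then have "j \<preceq> a \<otimes> c"
    using a d by (simp add: prefix_mult_left)
  then show ?thesis
    using j(2) prefix_trans by blast
qed

lemma is_head_mult_head:
  assumes a: "a \<in> P" and b: "b \<in> P" and t: "is_head b t" and h: "is_head (a \<otimes> t) h"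
  shows "is_head (a \<otimes> b) h"
  unfolding is_head_def
proof (intro conjI ballI impI)
  show "h \<in> S"
    using h by (simp add: is_head_def)
  have "a \<otimes> t \<preceq> a \<otimes> b"
    using t a by (simp add: is_head_def prefix_mult_left)
  then show "h \<preceq> a \<otimes> b"
    using h prefix_trans by (auto simp: is_head_def)
next
  fix v assume "v \<in> S" "v \<preceq> a \<otimes> b"
  then have "v \<preceq> a \<otimes> t"
    using simple_prefix_mult_head[of a b v t] a b t by (auto simp: is_head_def)
  then show "v \<preceq> h"
    using h \<open>v \<in> S\<close> by (simp add: is_head_def)
qed

definition left_weighted :: "'a \<Rightarrow> 'a \<Rightarrow> bool"
  where "left_weighted x y \<longleftrightarrow> (\<forall>v\<in>S. v \<preceq> x \<otimes> y \<longrightarrow> v \<preceq> x)"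

lemma left_weighted_coprime:
  assumes s: "s \<in> S" and weighted: "left_weighted s t"
    and v: "v \<in> S" "v \<preceq> \<partial> s" "v \<preceq> t"
  shows "v = \<one>"
proof -
  have "s \<otimes> v \<preceq> \<Delta>"
    using prefix_mult_left[OF v(2), of s] s by simp
  then have "s \<otimes> v \<in> S"
    using s v by (simp add: simpleI simple_positive positive_mult)
  moreover have "s \<otimes> v \<preceq> s \<otimes> t"
    using v s by (simp add: prefix_mult_left)
  ultimately have "s \<otimes> v \<preceq> s \<otimes> \<one>"
    using weighted s unfolding left_weighted_def by simp
  then have "v \<preceq> \<one>"
    using s v prefix_mult_left_iff[of s v \<one>] by simp
  then show "v = \<one>"
    using v by (simp add: simple_positive positive_prefix_one)
qed

lemma left_weighted_if_coprime:
  assumes s: "s \<in> S" and t: "t \<in> S"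
    and coprime: "\<And>v. v \<in> S \<Longrightarrow> v \<preceq> \<partial> s \<Longrightarrow> v \<preceq> t \<Longrightarrow> v = \<one>"
  shows "left_weighted s t"
  unfolding left_weighted_def
proof (intro ballI impI)
  fix u assume u: "u \<in> S" "u \<preceq> s \<otimes> t"
  obtain j where j: "s \<preceq> j" "u \<preceq> j" "\<And>x. s \<preceq> x \<Longrightarrow> u \<preceq> x \<Longrightarrow> j \<preceq> x"
    using lubE[of s u] s u by auto
  obtain d where d: "d \<in> P" "j = s \<otimes> d"
    using prefixE[OF j(1)] by blast
  have "j \<preceq> s \<otimes> t"
    using j s t u by (simp add: prefix_mult_right simple_positive)
  then have "d \<preceq> t"
    using s t d by (simp add: prefix_mult_left_iff)
  have "j \<preceq> \<Delta>"
    using j s u simple_prefix_Delta by simp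
  then have "d \<preceq> \<partial> s"
    using s d prefix_mult_left_iff[of s d "\<partial> s"] by simp
  have "d \<in> S"
    using \<open>d \<preceq> t\<close> t d prefix_trans simpleI simple_prefix_Delta by blast
  then have "d = \<one>"
    using coprime \<open>d \<preceq> t\<close> \<open>d \<preceq> \<partial> s\<close> by blast
  then show "u \<preceq> s"
    using j d s by simp
qed

lemma left_weighted_complement:
  assumes y: "y \<in> S" and x: "x \<in> S" and weighted: "left_weighted y x"
  shows "left_weighted (\<partial> x) (\<tau> 1 (\<partial> y))"
proof (rule left_weighted_if_coprime)
  fix v assume v: "v \<in> S" "v \<preceq> \<partial> (\<partial> x)" "v \<preceq> \<tau> 1 (\<partial> y)"
  have "\<tau> (- 1) v \<preceq> x" and "\<tau> (- 1) v \<preceq> \<partial> y"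
    using v x y prefix_tau_iff[of v x 1] prefix_tau_iff[of v "\<partial> y" 1] complement_complement[of x]
    by simp_all
  then have "\<tau> (- 1) v = \<one>"
    using left_weighted_coprime[OF y weighted] tau_simple v(1) by blast
  then show "v = \<one>"
    using tau_inverse[of v "- 1"] v(1) by simp
qed (use x y complement_simple tau_simple[of "\<partial> y" 1] in auto)

subsection \<open>Left normal forms\<close>

definition simple_prod :: "nat \<Rightarrow> 'a \<Rightarrow> bool"
  where "simple_prod n a \<longleftrightarrow> (\<exists>xs. length xs = n \<and> set xs \<subseteq> S \<and> list_prod G xs = a)"

lemma list_prod_simples_positive: "set xs \<subseteq> S \<Longrightarrow> list_prod G xs \<in> P"
  by (induction xs) (auto simp: positive_mult simple_positive)

lemma simple_prod_positive: "simple_prod n a \<Longrightarrow> a \<in> P"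
  unfolding simple_prod_def using list_prod_simples_positive by blast

lemma simple_prod_0 [simp]: "simple_prod 0 a \<longleftrightarrow> a = \<one>"
  by (auto simp: simple_prod_def)

lemma simple_prod_Suc: "simple_prod (Suc n) a \<longleftrightarrow> (\<exists>s q. s \<in> S \<and> simple_prod n q \<and> a = s \<otimes> q)"
proof
  assume "simple_prod (Suc n) a"
  then obtain s xs where "length xs = n" "set (s # xs) \<subseteq> S" "list_prod G (s # xs) = a"
    unfolding simple_prod_def by (auto simp: length_Suc_conv)
  then show "\<exists>s q. s \<in> S \<and> simple_prod n q \<and> a = s \<otimes> q"
    unfolding simple_prod_def by auto
next
  assume "\<exists>s q. s \<in> S \<and> simple_prod n q \<and> a = s \<otimes> q"
  then obtain s xs where "s \<in> S" "length xs = n" "set xs \<subseteq> S" "a = s \<otimes> list_prod G xs"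
    unfolding simple_prod_def by blast
  then show "simple_prod (Suc n) a"
    unfolding simple_prod_def by (intro exI[of _ "s # xs"]) auto
qed

lemma simple_prod_simple: "s \<in> S \<Longrightarrow> simple_prod 1 s"
  using simple_prod_Suc[of 0 s] by auto

lemma simple_prod_tau:
  assumes "simple_prod n a" shows "simple_prod n (\<tau> k a)"
proof -
  obtain xs where xs: "length xs = n" "set xs \<subseteq> S" "list_prod G xs = a"
    using assms by (auto simp: simple_prod_def)
  then have "list_prod G (map (\<tau> k) xs) = \<tau> k a"
    using list_prod_conj[of xs "\<Delta> [^] k"] simples_subset_carrier by auto
  moreover have "set (map (\<tau> k) xs) \<subseteq> S"
    using xs tau_simple by auto
  ultimately show ?thesis
    unfolding simple_prod_def using xs by (intro exI[of _ "map (\<tau> k) xs"]) auto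
qed

lemma simple_prod_mult:
  assumes "simple_prod n a" and "simple_prod m b" shows "simple_prod (n + m) (a \<otimes> b)"
proof -
  obtain xs ys where "length xs = n" "set xs \<subseteq> S" "list_prod G xs = a"
    and "length ys = m" "set ys \<subseteq> S" "list_prod G ys = b"
    using assms by (auto simp: simple_prod_def)
  then show ?thesis
    unfolding simple_prod_def using list_prod_append[of xs ys] simples_subset_carrier
    by (intro exI[of _ "xs @ ys"]) auto
qed

lemma simple_prod_prefix_Delta_pow: "simple_prod n q \<Longrightarrow> q \<preceq> \<Delta> [^] int n"
proof (induction n arbitrary: q)
  case 0
  then show ?case
    by (simp add: prefix_refl)
next
  case (Suc n)
  obtain s q' where s: "s \<in> S" and q': "simple_prod n q'" and q: "q = s \<otimes> q'"
    using Suc.prems simple_prod_Suc by blast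
  have "q \<preceq> s \<otimes> \<Delta> [^] int n"
    using Suc.IH[OF q'] s q by (simp add: prefix_mult_left)
  also have "s \<otimes> \<Delta> [^] int n = \<Delta> [^] int n \<otimes> \<tau> (int n) s"
    using s by (simp add: conj_def m_assoc[symmetric])
  also have "\<dots> \<preceq> \<Delta> [^] int n \<otimes> \<Delta>"
    using s tau_simple simple_prefix_Delta prefix_mult_left by simp
  also have "\<Delta> [^] int n \<otimes> \<Delta> = \<Delta> [^] int (Suc n)"
    using int_pow_mult[of \<Delta> "int n" 1] by (simp add: add.commute)
  finally show ?case .
qed

lemma simple_prod_remove_head: "simple_prod (Suc n) q \<Longrightarrow> is_head q h \<Longrightarrow> simple_prod n (inv h \<otimes> q)"
proof (induction n arbitrary: q h)
  case 0
  then obtain s where "s \<in> S" "q = s"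
    using simple_prod_Suc[of 0 q] by auto
  moreover then have "h = s"
    using head_unique is_head_simple 0 by blast
  ultimately show ?case
    by simp
next
  case (Suc n)
  obtain s q' where s: "s \<in> S" and q': "simple_prod (Suc n) q'" and q: "q = s \<otimes> q'"
    using Suc.prems simple_prod_Suc by blast
  have q'_pos: "q' \<in> P"
    using q' simple_prod_positive by blast
  obtain t where t: "is_head q' t"
    using head_exists q'_pos by blast
  then have t_simple: "t \<in> S" and "t \<preceq> q'"
    by (simp_all add: is_head_def)
  obtain h' where h': "is_head (s \<otimes> t) h'"
    using head_exists s t_simple by (meson positive_mult simple_positive)
  have "h = h'"
    using is_head_mult_head[OF simple_positive[OF s] q'_pos t h'] Suc.prems(2) q head_unique
    by blast
  have "s \<preceq> h'"
    using h' s t_simple by (simp add: is_head_def prefix_mult_right simple_positive)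
  then obtain e where e: "e \<in> P" "h' = s \<otimes> e"
    by (rule prefixE)
  then have "e \<preceq> t"
    using h' s t_simple by (simp add: is_head_def prefix_mult_left_iff)
  then have "inv e \<otimes> t \<in> S"
    using simple_suffix e t_simple by blast
  moreover have "inv h \<otimes> q = (inv e \<otimes> t) \<otimes> (inv t \<otimes> q')"
    using \<open>h = h'\<close> e q s t_simple q'_pos by (simp add: inv_mult_group m_assoc)
  moreover have "simple_prod n (inv t \<otimes> q')"
    using Suc.IH q' t by blast
  ultimately show ?case
    using simple_prod_Suc by blast
qed

lemma generate_simples_fraction:
  "g \<in> generate G S \<Longrightarrow> \<exists>m q n. simple_prod n q \<and> g = inv (\<Delta> [^] (m::nat)) \<otimes> q"
proof (induction rule: generate.induct)
  case one
  then show ?case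
    by (intro exI[of _ 0] exI[of _ \<one>]) auto
next
  case (incl h)
  then show ?case
    using simple_prod_simple by (intro exI[of _ 0] exI[of _ h] exI[of _ 1]) auto
next
  case (inv h)
  have "\<Delta> \<otimes> inv h = \<tau> (- 1) (\<partial> h)"
    using inv by (simp add: conj_def int_pow_neg m_assoc)
  then have "simple_prod 1 (\<Delta> \<otimes> inv h)"
    using inv simple_prod_simple tau_simple complement_simple by simp
  moreover have "inv h = inv (\<Delta> [^] (1::nat)) \<otimes> (\<Delta> \<otimes> inv h)"
    using inv by (simp add: m_assoc[symmetric])
  ultimately show ?case
    by blast
next
  case (eng g1 g2)
  obtain m1 q1 n1 where 1: "simple_prod n1 q1" "g1 = inv (\<Delta> [^] (m1::nat)) \<otimes> q1"
    using eng by blast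
  obtain m2 q2 n2 where 2: "simple_prod n2 q2" "g2 = inv (\<Delta> [^] (m2::nat)) \<otimes> q2"
    using eng by blast
  have "\<tau> (- int m2) q1 = \<Delta> [^] m2 \<otimes> q1 \<otimes> inv (\<Delta> [^] m2)"
    by (simp add: conj_def int_pow_neg_int)
  then have "g1 \<otimes> g2 = inv (\<Delta> [^] (m2 + m1)) \<otimes> (\<tau> (- int m2) q1 \<otimes> q2)"
    using 1 2 simple_prod_positive
    by (simp add: nat_pow_mult[symmetric] inv_mult_group m_assoc)
  moreover have "simple_prod (n1 + n2) (\<tau> (- int m2) q1 \<otimes> q2)"
    using simple_prod_mult simple_prod_tau 1 2 by blast
  ultimately show ?case
    by blast
qed

lemma Delta_pow_positive: "\<Delta> [^] (n::nat) \<in> P"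
  by (induction n) (simp_all add: positive_mult Delta_positive)

lemma simple_prod_cancel_Delta:
  assumes "simple_prod n (\<Delta> \<otimes> y)" and "y \<in> P"
  shows "simple_prod (n - 1) y"
proof (cases n)
  case 0
  then have "\<Delta> \<otimes> y = \<one>"
    using assms by simp
  then have "inv y = \<Delta>"
    using assms inv_equality by simp
  then have "y = \<one>"
    by (metis positive_antisym Delta_positive assms(2))
  then show ?thesis
    using 0 by simp
next
  case (Suc k)
  have "is_head (\<Delta> \<otimes> y) \<Delta>"
    using assms Delta_positive unfolding is_head_def
    by (simp add: prefix_mult_right simple_prefix_Delta)
  then show ?thesis
    using simple_prod_remove_head assms Suc by fastforce
qed

lemma positive_simple_prod:
  assumes "a \<in> P" obtains n where "simple_prod n a"
proof -
  have "a \<in> generate G S"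
    using assms generate_simples by simp
  then obtain m q n where "simple_prod n q" "a = inv (\<Delta> [^] (m::nat)) \<otimes> q"
    using generate_simples_fraction by blast
  then have "\<Delta> [^] m \<otimes> a = q"
    using simple_prod_positive by simp
  then have "simple_prod n (\<Delta> [^] m \<otimes> a)"
    using \<open>simple_prod n q\<close> by simp
  then have "\<exists>n. simple_prod n a"
  proof (induction m arbitrary: n)
    case (Suc m)
    have "\<Delta> [^] Suc m \<otimes> a = \<Delta> \<otimes> (\<Delta> [^] m \<otimes> a)"
      using assms nat_pow_Suc2[of \<Delta> m] by (simp add: m_assoc)
    moreover have "\<Delta> [^] m \<otimes> a \<in> P"
      using Delta_pow_positive assms positive_mult by blast
    ultimately show ?case
      using Suc simple_prod_cancel_Delta by metis
  qed (use assms in auto)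
  then show ?thesis
    using that by blast
qed

fun left_normal :: "'a list \<Rightarrow> bool" where
  "left_normal [] \<longleftrightarrow> True"
| "left_normal (x # xs) \<longleftrightarrow> x \<noteq> \<one> \<and> x \<in> S \<and> left_weighted x (list_prod G xs) \<and> left_normal xs"

lemma left_normal_simples: "left_normal xs \<Longrightarrow> set xs \<subseteq> S"
  by (induction xs) auto

lemma left_normal_positive: "left_normal xs \<Longrightarrow> list_prod G xs \<in> P"
  using left_normal_simples list_prod_simples_positive by blast

lemma left_normal_not_one: "left_normal xs \<Longrightarrow> x \<in> set xs \<Longrightarrow> x \<noteq> \<one>"
  by (induction xs) auto

lemma left_normal_Cons_head: "left_normal (x # xs) \<Longrightarrow> is_head (x \<otimes> list_prod G xs) x"
  using left_normal_positive prefix_mult_right by (auto simp: is_head_def left_weighted_def)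

lemma left_normal_prod_eq_one_iff: "left_normal xs \<Longrightarrow> list_prod G xs = \<one> \<longleftrightarrow> xs = []"
proof (cases xs)
  case (Cons x xs')
  assume "left_normal xs"
  then have "x \<preceq> list_prod G xs" and "x \<in> P"
    using Cons left_normal_Cons_head by (simp_all add: is_head_def simple_positive)
  then show ?thesis
    using Cons \<open>left_normal xs\<close> positive_prefix_one by auto
qed simp

lemma left_normal_unique:
  "left_normal xs \<Longrightarrow> left_normal ys \<Longrightarrow> list_prod G xs = list_prod G ys \<Longrightarrow> xs = ys"
proof (induction xs arbitrary: ys)
  case Nil
  then show ?case
    using left_normal_prod_eq_one_iff[of ys] by auto
next
  case (Cons x xs)
  then obtain y ys' where ys: "ys = y # ys'"
    using left_normal_prod_eq_one_iff[of ys] left_normal_prod_eq_one_iff[of "x # xs"]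
    by (cases ys) auto
  have "is_head (list_prod G (x # xs)) x"
    using Cons.prems(1) left_normal_Cons_head by simp
  moreover have "is_head (list_prod G ys) y"
    using Cons.prems(2) ys left_normal_Cons_head by simp
  ultimately have "x = y"
    using Cons.prems(3) head_unique by simp
  then have "list_prod G xs = list_prod G ys'"
    using Cons.prems ys left_normal_positive by simp
  then show ?case
    using Cons ys \<open>x = y\<close> by simp
qed

lemma left_normal_exists:
  assumes "a \<in> P" obtains xs where "left_normal xs" and "list_prod G xs = a"
proof -
  obtain n where "simple_prod n a"
    using positive_simple_prod assms by blast
  then have "\<exists>xs. left_normal xs \<and> list_prod G xs = a"
  proof (induction n arbitrary: a)
    case 0
    then show ?case
      by (intro exI[of _ "[]"]) simp
  next
    case (Suc n)
    obtain h where h: "is_head a h"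
      using head_exists Suc.prems simple_prod_positive by blast
    have "simple_prod n (inv h \<otimes> a)"
      using simple_prod_remove_head Suc.prems h by blast
    then obtain xs where xs: "left_normal xs" "list_prod G xs = inv h \<otimes> a"
      using Suc.IH by blast
    have "a \<in> carrier G" and "h \<in> carrier G"
      using Suc.prems h simple_prod_positive by (auto simp: is_head_def)
    then have a: "a = h \<otimes> list_prod G xs"
      using xs by simp
    show ?case
    proof (cases "h = \<one>")
      case True
      then show ?thesis
        using xs(1) a left_normal_positive by auto
    next
      case False
      then have "left_normal (h # xs)"
        using h a xs(1) by (simp add: is_head_def left_weighted_def)
      then show ?thesis
        using a by (intro exI[of _ "h # xs"]) simp
    qed
  qed
  then show ?thesis
    using that by blast
qed

lemma left_normal_iff_nth:
  "left_normal xs \<longleftrightarrow> (\<forall>i<length xs. xs ! i \<noteq> \<one> \<and> xs ! i \<in> S \<and> xs ! i \<preceq> list_prod G (drop i xs) \<and>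
      (\<forall>s\<in>S. s \<preceq> list_prod G (drop i xs) \<longrightarrow> s \<preceq> xs ! i))"
proof (induction xs)
  case (Cons x xs)
  have "x \<in> S \<Longrightarrow> left_normal xs \<Longrightarrow> x \<preceq> x \<otimes> list_prod G xs"
    using left_normal_positive prefix_mult_right by simp
  then show ?case
    using Cons by (auto simp: All_less_Suc2 left_weighted_def)
qed simp

lemma is_lnf_iff:
  "is_lnf G P \<Delta> X p xs \<longleftrightarrow> p = ginf G P \<Delta> X \<and> X = \<Delta> [^] p \<otimes> list_prod G xs \<and> left_normal xs"
  unfolding is_lnf_def left_normal_iff_nth by blast

lemma left_normal_butlast: "left_normal (ys @ [x]) \<Longrightarrow> left_normal ys"
proof (induction ys)
  case (Cons y ys)
  have "set (y # ys @ [x]) \<subseteq> S"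
    using left_normal_simples[OF Cons.prems] by simp
  then have "y \<otimes> list_prod G ys \<preceq> y \<otimes> list_prod G (ys @ [x])"
    by (simp add: list_prod_append m_assoc[symmetric] prefix_mult_right simple_positive subset_eq)
  then have "left_weighted y (list_prod G ys)"
    using Cons.prems prefix_trans by (auto simp: left_weighted_def)
  then show ?case
    using Cons by simp
qed simp

lemma left_normal_last_weighted:
  "left_normal (ys @ [x]) \<Longrightarrow> ys \<noteq> [] \<Longrightarrow> left_weighted (last ys) x"
  by (induction ys) (auto simp: neq_Nil_conv)

lemma complement_positive: "set xs \<subseteq> S \<Longrightarrow> inv (list_prod G xs) \<otimes> \<Delta> [^] int (length xs) \<in> P"
  using simple_prod_prefix_Delta_pow[of "length xs" "list_prod G xs"]
  unfolding simple_prod_def by (auto simp: prefix_iff)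

lemma complement_snoc:
  assumes ys: "set ys \<subseteq> S" and x: "x \<in> S"
  shows "inv (list_prod G (ys @ [x])) \<otimes> \<Delta> [^] int (length (ys @ [x]))
    = \<partial> x \<otimes> \<tau> 1 (inv (list_prod G ys) \<otimes> \<Delta> [^] int (length ys))"
proof -
  have "\<Delta> [^] int (length (ys @ [x])) = \<Delta> [^] int (length ys) \<otimes> \<Delta>"
    using int_pow_mult[of \<Delta> "int (length ys)" 1] by (simp add: add.commute)
  then show ?thesis
    using x ys by (simp add: list_prod_append subset_eq conj_def m_assoc inv_mult_group)
qed

text \<open>Peeling off \<open>x\<^sub>r\<close> writes the complement \<open>(x\<^sub>1 \<cdots> x\<^sub>r)\<^sup>-\<^sup>1 \<Delta>\<^sup>r\<close> as
  \<open>\<partial> x\<^sub>r \<otimes> \<tau> 1 w\<close>, where \<open>w\<close> is the complement of \<open>x\<^sub>1 \<cdots> x\<^sub>r\<^sub>-\<^sub>1\<close>; by induction the simple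
  prefixes of \<open>\<tau> 1 w\<close> lie below \<open>\<tau> 1 (\<partial> x\<^sub>r\<^sub>-\<^sub>1)\<close>, which is coprime to \<open>\<partial> (\<partial> x\<^sub>r) = \<tau> 1 x\<^sub>r\<close>
  because \<open>(x\<^sub>r\<^sub>-\<^sub>1, x\<^sub>r)\<close> is left weighted.\<close>

lemma simple_prefix_complement_left_normal:
  "left_normal xs \<Longrightarrow> xs \<noteq> [] \<Longrightarrow> u \<in> S \<Longrightarrow>
    u \<preceq> inv (list_prod G xs) \<otimes> \<Delta> [^] int (length xs) \<Longrightarrow> u \<preceq> \<partial> (last xs)"
proof (induction xs arbitrary: u rule: rev_induct)
  case (snoc x ys)
  have x: "x \<in> S" and ys: "set ys \<subseteq> S"
    using left_normal_simples[OF snoc.prems(1)] by auto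
  show ?case
  proof (cases "ys = []")
    case True
    then show ?thesis
      using snoc.prems x by simp
  next
    case False
    define w where "w = inv (list_prod G ys) \<otimes> \<Delta> [^] int (length ys)"
    define y where "y = last ys"
    have ys_normal: "left_normal ys"
      using left_normal_butlast snoc.prems(1) by blast
    have y: "y \<in> S"
      using y_def False ys by auto
    have w: "w \<in> P"
      unfolding w_def by (rule complement_positive[OF ys])
    have complement_eq:
      "inv (list_prod G (ys @ [x])) \<otimes> \<Delta> [^] int (length (ys @ [x])) = \<partial> x \<otimes> \<tau> 1 w"
      unfolding w_def by (rule complement_snoc[OF ys x])
    have heads: "v \<preceq> \<tau> 1 (\<partial> y)" if "v \<in> S" "v \<preceq> \<tau> 1 w" for v
    proof -
      have "\<tau> (- 1) v \<preceq> w"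
        using that w prefix_tau_iff[of v w 1] by simp
      then have "\<tau> (- 1) v \<preceq> \<partial> y"
        using snoc.IH[OF ys_normal False] tau_simple that(1) w_def y_def by blast
      then show ?thesis
        using that y prefix_tau_iff[of v "\<partial> y" 1] by simp
    qed
    have "u \<preceq> \<partial> x \<otimes> \<tau> 1 (\<partial> y)"
      using simple_prefix_mult_head[of "\<partial> x" "\<tau> 1 w" u "\<tau> 1 (\<partial> y)"] heads snoc.prems(3,4)
        complement_eq complement_simple x y w tau_positive[of w 1] simple_positive by simp
    moreover have "left_weighted (\<partial> x) (\<tau> 1 (\<partial> y))"
      using left_weighted_complement y x left_normal_last_weighted snoc.prems(1) False y_def
      by blast
    ultimately show ?thesis
      using snoc.prems(3) by (simp add: left_weighted_def)
  qed
qed simp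

lemma left_normal_not_prefix_Delta_pow_pred:
  assumes xs: "left_normal xs" and nonempty: "xs \<noteq> []"
  shows "\<not> list_prod G xs \<preceq> \<Delta> [^] (int (length xs) - 1)"
proof
  define v where "v = inv (list_prod G xs) \<otimes> \<Delta> [^] (int (length xs) - 1)"
  assume "list_prod G xs \<preceq> \<Delta> [^] (int (length xs) - 1)"
  then have v: "v \<in> P"
    by (simp add: v_def prefix_iff)
  have "inv (list_prod G xs) \<otimes> \<Delta> [^] int (length xs) = v \<otimes> \<Delta>"
    using int_pow_mult[of \<Delta> "int (length xs) - 1" 1] left_normal_positive[OF xs]
    by (simp add: v_def m_assoc)
  then have "\<Delta> \<preceq> \<partial> (last xs)"
    using simple_prefix_complement_left_normal[OF xs nonempty Delta_simple]
      Delta_prefix_mult_Delta[OF v] by simp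
  moreover have last: "last xs \<in> S"
    using nonempty left_normal_simples[OF xs] by auto
  ultimately have "\<partial> (last xs) = \<Delta>"
    using prefix_antisym simple_prefix_Delta complement_simple by blast
  then have "last xs = \<one>"
    using last by simp
  then show False
    using left_normal_not_one[OF xs] nonempty by simp
qed

subsection \<open>Conjugating along an arrow\<close>

lemma circ_conj:
  assumes "Z \<in> carrier G" and "s \<in> carrier G"
    and "ginf G P \<Delta> (conj G Z s) = ginf G P \<Delta> Z"
  shows "circ G P \<Delta> (conj G Z s) = inv s \<otimes> circ G P \<Delta> Z \<otimes> \<tau> (- ginf G P \<Delta> Z) s"
  using assms by (simp add: circ_def conj_def int_pow_neg m_assoc)

lemma prefix_circ_conj:
  assumes "Z \<in> carrier G" and "s \<in> S" and "b \<in> P"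
    and "s \<otimes> b \<preceq> circ G P \<Delta> Z" and "ginf G P \<Delta> (conj G Z s) = ginf G P \<Delta> Z"
  shows "b \<preceq> circ G P \<Delta> (conj G Z s)"
proof -
  have "b \<preceq> inv s \<otimes> circ G P \<Delta> Z"
    using prefix_mult_left[OF assms(4), of "inv s"] assms(2,3) by simp
  also have "\<dots> \<preceq> inv s \<otimes> circ G P \<Delta> Z \<otimes> \<tau> (- ginf G P \<Delta> Z) s"
    using assms(1,2) by (simp add: circ_def prefix_mult_right tau_positive simple_positive)
  finally show ?thesis
    using circ_conj assms by simp
qed

end

lemma USS_ginf_gsup_eq:
  assumes "Y \<in> USS G P \<Delta> X" and "Y' \<in> USS G P \<Delta> X"
  shows "ginf G P \<Delta> Y' = ginf G P \<Delta> Y" and "gsup G P \<Delta> Y' = gsup G P \<Delta> Y"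
  using assms unfolding USS_def SSS_def by (auto intro: order.antisym)

lemma (in group) USS_closed: "X \<in> carrier G \<Longrightarrow> Y \<in> USS G P \<Delta> X \<Longrightarrow> Y \<in> carrier G"
  unfolding USS_def SSS_def conjugates_def by auto

lemma oriented_path_simples: "oriented_path G P \<Delta> X Y ss \<Longrightarrow> set ss \<subseteq> simples G P \<Delta>"
  by (induction ss arbitrary: Y) (auto simp: minimal_simple_def)

subsection \<open>Infimum and supremum\<close>

locale nontrivial_garside_group = garside_group +
  assumes Delta_neq_one: "\<Delta> \<noteq> \<one>"
begin

lemma Delta_pow_neq_one:
  assumes "0 < n" shows "\<Delta> [^] (n::nat) \<noteq> \<one>"
proof
  assume "\<Delta> [^] n = \<one>"
  then have "\<Delta> [^] Suc (n - 1) = \<one>"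
    using assms by simp
  then have "\<Delta> [^] (n - 1) \<otimes> \<Delta> = \<one>"
    by simp
  then have "inv \<Delta> = \<Delta> [^] (n - 1)"
    by (simp add: inv_equality)
  then show False
    using positive_antisym Delta_positive Delta_pow_positive Delta_neq_one by metis
qed

lemma Delta_pow_prefix_iff: "\<Delta> [^] (k::int) \<preceq> \<Delta> [^] (l::int) \<longleftrightarrow> k \<le> l"
proof -
  have "inv (\<Delta> [^] k) \<otimes> \<Delta> [^] l = \<Delta> [^] (l - k)"
    using int_pow_mult[of \<Delta> "- k" l] int_pow_neg[of \<Delta> k] by simp
  then have "\<Delta> [^] k \<preceq> \<Delta> [^] l \<longleftrightarrow> \<Delta> [^] (l - k) \<in> P"
    by (simp add: prefix_iff)
  also have "\<dots> \<longleftrightarrow> k \<le> l"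
  proof
    assume "\<Delta> [^] (l - k) \<in> P"
    show "k \<le> l"
    proof (rule ccontr)
      assume "\<not> k \<le> l"
      then have "\<Delta> [^] (l - k) = inv (\<Delta> [^] nat (k - l))"
        using int_pow_neg_int[of \<Delta> "nat (k - l)"] by simp
      then have "\<Delta> [^] nat (k - l) = \<one>"
        using positive_antisym Delta_pow_positive \<open>\<Delta> [^] (l - k) \<in> P\<close> by metis
      then show False
        using Delta_pow_neq_one[of "nat (k - l)"] \<open>\<not> k \<le> l\<close> by simp
    qed
  next
    assume "k \<le> l"
    then show "\<Delta> [^] (l - k) \<in> P"
      using Delta_pow_positive[of "nat (l - k)"] by simp
  qed
  finally show ?thesis .
qed

lemma Delta_pow_ginf_prefix:
  assumes "Y \<in> carrier G"
  shows "\<Delta> [^] ginf G P \<Delta> Y \<preceq> Y"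
proof -
  have "Y \<in> generate G S"
    using assms generate_simples by simp
  then obtain m q n where q: "simple_prod n q" and Y: "Y = inv (\<Delta> [^] (m::nat)) \<otimes> q"
    using generate_simples_fraction by blast
  have q_closed: "q \<in> carrier G"
    using q simple_prod_positive by simp
  have lower: "\<Delta> [^] (- int m) \<preceq> Y"
    using q q_closed simple_prod_positive by (simp add: Y prefix_iff int_pow_neg_int)
  have upper: "k \<le> int n - int m" if "\<Delta> [^] k \<preceq> Y" for k
  proof -
    have "\<Delta> [^] (int m + k) = \<Delta> [^] m \<otimes> \<Delta> [^] k"
      by (simp add: int_pow_mult int_pow_int)
    also have "\<dots> \<preceq> \<Delta> [^] m \<otimes> Y"
      using that by (simp add: prefix_mult_left)
    also have "\<Delta> [^] m \<otimes> Y = q"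
      using q_closed by (simp add: Y)
    also have "q \<preceq> \<Delta> [^] int n"
      using q by (rule simple_prod_prefix_Delta_pow)
    finally show ?thesis
      by (simp add: Delta_pow_prefix_iff)
  qed
  show ?thesis
    unfolding ginf_def by (rule GreatestI_int[where Q = "\<lambda>p. \<Delta> [^] p \<preceq> Y", OF lower upper])
qed

lemma
  assumes "Y \<in> carrier G"
  shows left_normal_lnf_factors: "left_normal (lnf_factors G P \<Delta> Y)"
    and lnf_factors_decomp: "Y = \<Delta> [^] ginf G P \<Delta> Y \<otimes> list_prod G (lnf_factors G P \<Delta> Y)"
proof -
  define p where "p = ginf G P \<Delta> Y"
  have "inv (\<Delta> [^] p) \<otimes> Y \<in> P"
    using Delta_pow_ginf_prefix[OF assms] by (simp add: p_def prefix_iff)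
  then obtain xs where xs: "left_normal xs" and xs_prod: "list_prod G xs = inv (\<Delta> [^] p) \<otimes> Y"
    using left_normal_exists by blast
  have unique: "ys = xs" if "is_lnf G P \<Delta> Y p ys" for ys
  proof -
    have ys: "left_normal ys" "Y = \<Delta> [^] p \<otimes> list_prod G ys"
      using that unfolding is_lnf_iff by blast+
    then have "list_prod G ys = list_prod G xs"
      using xs_prod left_normal_positive by simp
    then show ?thesis
      using left_normal_unique ys(1) xs by blast
  qed
  have "Y = \<Delta> [^] p \<otimes> list_prod G xs"
    using xs_prod assms by simp
  then have "is_lnf G P \<Delta> Y p xs"
    using xs p_def unfolding is_lnf_iff by blast
  then have "is_lnf G P \<Delta> Y p (lnf_factors G P \<Delta> Y)"
    unfolding lnf_factors_def p_def[symmetric] using unique by (rule theI)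
  then have "left_normal (lnf_factors G P \<Delta> Y) \<and> Y = \<Delta> [^] p \<otimes> list_prod G (lnf_factors G P \<Delta> Y)"
    unfolding is_lnf_iff by blast
  then show "left_normal (lnf_factors G P \<Delta> Y)"
    and "Y = \<Delta> [^] ginf G P \<Delta> Y \<otimes> list_prod G (lnf_factors G P \<Delta> Y)"
    unfolding p_def by blast+
qed

lemma left_normal_prefix_Delta_pow_iff:
  assumes xs: "left_normal xs"
  shows "list_prod G xs \<preceq> \<Delta> [^] k \<longleftrightarrow> int (length xs) \<le> k"
proof
  assume "int (length xs) \<le> k"
  moreover have "list_prod G xs \<preceq> \<Delta> [^] int (length xs)"
    using xs left_normal_simples simple_prod_prefix_Delta_pow simple_prod_def by blast
  ultimately show "list_prod G xs \<preceq> \<Delta> [^] k"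
    using prefix_trans Delta_pow_prefix_iff by blast
next
  assume le: "list_prod G xs \<preceq> \<Delta> [^] k"
  show "int (length xs) \<le> k"
  proof (rule ccontr)
    assume "\<not> int (length xs) \<le> k"
    then have "\<Delta> [^] k \<preceq> \<Delta> [^] (int (length xs) - 1)"
      by (simp add: Delta_pow_prefix_iff)
    then have "list_prod G xs \<preceq> \<Delta> [^] (int (length xs) - 1)"
      using le prefix_trans by blast
    then show False
      using left_normal_not_prefix_Delta_pow_pred[OF xs] Delta_pow_prefix_iff[of 0 "- 1"]
      by (cases "xs = []") auto
  qed
qed

lemma ginf_inv:
  assumes Y: "Y \<in> carrier G"
  shows "ginf G P \<Delta> (inv Y) = - gsup G P \<Delta> Y"
proof -
  define p where "p = ginf G P \<Delta> Y"
  define xs where "xs = lnf_factors G P \<Delta> Y"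
  have xs: "left_normal xs"
    unfolding xs_def by (rule left_normal_lnf_factors[OF Y])
  have Y_eq: "Y = \<Delta> [^] p \<otimes> list_prod G xs"
    unfolding p_def xs_def by (rule lnf_factors_decomp[OF Y])
  have xs_closed: "list_prod G xs \<in> carrier G"
    using xs left_normal_positive by simp
  have below_power: "Y \<preceq> \<Delta> [^] t \<longleftrightarrow> p + int (length xs) \<le> t" for t :: int
  proof -
    have "Y \<preceq> \<Delta> [^] t \<longleftrightarrow> \<Delta> [^] p \<otimes> list_prod G xs \<preceq> \<Delta> [^] p \<otimes> \<Delta> [^] (t - p)"
      using Y_eq by (simp add: int_pow_mult[symmetric])
    also have "\<dots> \<longleftrightarrow> list_prod G xs \<preceq> \<Delta> [^] (t - p)"
      using xs_closed by (simp add: prefix_mult_left_iff)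
    also have "\<dots> \<longleftrightarrow> int (length xs) \<le> t - p"
      by (rule left_normal_prefix_Delta_pow_iff[OF xs])
    finally show ?thesis
      by linarith
  qed
  have above_power_inv: "\<Delta> [^] q \<preceq> inv Y \<longleftrightarrow> Y \<preceq> \<Delta> [^] (- q)" for q :: int
  proof -
    have "inv (\<Delta> [^] q) \<otimes> inv Y = \<tau> q (inv Y \<otimes> \<Delta> [^] (- q))"
      using Y by (simp add: conj_def int_pow_neg m_assoc)
    then show ?thesis
      using Y by (simp add: prefix_iff tau_positive_iff)
  qed
  have "ginf G P \<Delta> (inv Y) = - (p + int (length xs))"
    unfolding ginf_def
    by (rule Greatest_equality) (simp_all add: above_power_inv below_power)
  then show ?thesis
    by (simp add: gsup_def p_def xs_def)
qed

subsection \<open>Black and grey paths\<close>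

lemma circ_eq_tau:
  assumes "Y \<in> carrier G"
  shows "circ G P \<Delta> Y = \<tau> (- ginf G P \<Delta> Y) (list_prod G (lnf_factors G P \<Delta> Y))"
proof -
  define p where "p = ginf G P \<Delta> Y"
  define xs where "xs = lnf_factors G P \<Delta> Y"
  have "Y = \<Delta> [^] p \<otimes> list_prod G xs"
    unfolding p_def xs_def by (rule lnf_factors_decomp[OF assms])
  moreover have "list_prod G xs \<in> carrier G"
    using left_normal_positive left_normal_lnf_factors assms by (simp add: xs_def)
  ultimately show ?thesis
    unfolding circ_def p_def[symmetric] xs_def[symmetric] by (simp add: conj_def int_pow_neg m_assoc)
qed

lemma simple_prefix_circ_prefix_iota:
  assumes Y: "Y \<in> carrier G" and s: "s \<in> S" "s \<noteq> \<one>" and le: "s \<preceq> circ G P \<Delta> Y"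
  shows "s \<preceq> iota G P \<Delta> Y"
proof -
  define p where "p = ginf G P \<Delta> Y"
  define xs where "xs = lnf_factors G P \<Delta> Y"
  have xs: "left_normal xs"
    using left_normal_lnf_factors[OF Y] by (simp add: xs_def)
  have "\<tau> p s \<preceq> list_prod G xs"
    using le circ_eq_tau[OF Y] prefix_tau_iff xs left_normal_positive s
    by (simp add: p_def xs_def)
  show ?thesis
  proof (cases xs)
    case Nil
    then have "\<tau> p s = \<one>"
      using \<open>\<tau> p s \<preceq> list_prod G xs\<close> s tau_positive simple_positive positive_prefix_one
      by simp
    then have "s = \<one>"
      using tau_inverse[of s p] s by simp
    then show ?thesis
      using s by simp
  next
    case (Cons x xs')
    then have "\<tau> p s \<preceq> x"
      using xs \<open>\<tau> p s \<preceq> list_prod G xs\<close> tau_simple[OF s(1)] by (simp add: left_weighted_def)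
    then have "s \<preceq> \<tau> (- p) x"
      using prefix_tau_iff[of s x "- p"] s xs Cons by simp
    then show ?thesis
      using Cons by (simp add: iota_def tau_pow_def p_def xs_def)
  qed
qed

lemma arrow_prefix_circ:
  assumes Z: "Z \<in> carrier G" and s: "s \<in> S" "s \<noteq> \<one>" and b: "b \<in> P"
    and le: "s \<otimes> b \<preceq> circ G P \<Delta> Z" and same_inf: "ginf G P \<Delta> (conj G Z s) = ginf G P \<Delta> Z"
  shows "s \<preceq> iota G P \<Delta> Z" and "b \<preceq> circ G P \<Delta> (conj G Z s)"
proof -
  have "s \<preceq> s \<otimes> b"
    using s b by (simp add: prefix_mult_right)
  then show "s \<preceq> iota G P \<Delta> Z"
    using simple_prefix_circ_prefix_iota[OF Z s] le prefix_trans by blast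
  show "b \<preceq> circ G P \<Delta> (conj G Z s)"
    using prefix_circ_conj[OF Z s(1) b le same_inf] .
qed

lemma black_path_if_prefix_circ:
  assumes "X \<in> carrier G"
  shows "oriented_path G P \<Delta> X Y ss \<Longrightarrow> list_prod G ss \<preceq> circ G P \<Delta> Y \<Longrightarrow> black_path G P \<Delta> Y ss"
proof (induction ss arbitrary: Y)
  case (Cons s ss)
  then have Y: "Y \<in> USS G P \<Delta> X" and s: "s \<in> S" "s \<noteq> \<one>" and Ys: "conj G Y s \<in> USS G P \<Delta> X"
    and path: "oriented_path G P \<Delta> X (conj G Y s) ss"
    by (auto simp: minimal_simple_def)
  have "list_prod G ss \<in> P"
    using oriented_path_simples[OF path] list_prod_simples_positive by blast
  then have "s \<preceq> iota G P \<Delta> Y" and "list_prod G ss \<preceq> circ G P \<Delta> (conj G Y s)"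
    using arrow_prefix_circ[OF USS_closed[OF assms Y] s] Cons.prems(2) USS_ginf_gsup_eq[OF Y Ys]
    by simp_all
  then show ?case
    using Cons.IH path by simp
qed simp

lemma grey_path_if_prefix_circ_inv:
  assumes "X \<in> carrier G"
  shows "oriented_path G P \<Delta> X Y ss \<Longrightarrow> list_prod G ss \<preceq> circ G P \<Delta> (inv Y) \<Longrightarrow> grey_path G P \<Delta> Y ss"
proof (induction ss arbitrary: Y)
  case (Cons s ss)
  then have Y: "Y \<in> USS G P \<Delta> X" and s: "s \<in> S" "s \<noteq> \<one>" and Ys: "conj G Y s \<in> USS G P \<Delta> X"
    and path: "oriented_path G P \<Delta> X (conj G Y s) ss"
    by (auto simp: minimal_simple_def)
  have Y_closed: "Y \<in> carrier G"
    using USS_closed[OF assms Y] .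
  have conj_inv_eq: "conj G (inv Y) s = inv (conj G Y s)"
    using conj_inv Y_closed s by simp
  have "ginf G P \<Delta> (conj G (inv Y) s) = ginf G P \<Delta> (inv Y)"
    using ginf_inv Y_closed s USS_ginf_gsup_eq[OF Y Ys] by (simp add: conj_inv_eq)
  moreover have "list_prod G ss \<in> P"
    using oriented_path_simples[OF path] list_prod_simples_positive by blast
  ultimately have "s \<preceq> iota G P \<Delta> (inv Y)" and "list_prod G ss \<preceq> circ G P \<Delta> (inv (conj G Y s))"
    using arrow_prefix_circ[of "inv Y" s "list_prod G ss"] Y_closed s Cons.prems(2)
    by (simp_all add: conj_inv_eq)
  then show ?case
    using Cons.IH path by simp
qed simp

end

theorem mainTheorem5:
  fixes G :: "('a, 'b) monoid_scheme" and P :: "'a set" and \<Delta> X Y :: 'a and ss :: "'a list"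
  assumes "garside G P \<Delta>"
    and "X \<in> carrier G"
    and "oriented_path G P \<Delta> X Y ss"
  shows "(prec G P (list_prod G ss) (circ G P \<Delta> Y) \<longrightarrow> black_path G P \<Delta> Y ss)
       \<and> (prec G P (list_prod G ss) (circ G P \<Delta> (inv\<^bsub>G\<^esub> Y)) \<longrightarrow> grey_path G P \<Delta> Y ss)"
proof -
  interpret garside_group G P \<Delta>
    using assms(1) by (simp add: garside_group_def garside_group_axioms_def garside_def)
  show ?thesis
  proof (cases "\<Delta> = \<one>\<^bsub>G\<^esub>")
    case True
    then have "ss = []"
      using assms(3) Delta_neq_one_if_simple
      by (cases ss) (auto simp: minimal_simple_def)
    then show ?thesis
      by simp
  next
    case False
    then interpret nontrivial_garside_group G P \<Delta>
      by unfold_locales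
    show ?thesis
      using black_path_if_prefix_circ grey_path_if_prefix_circ_inv assms(2,3) by blast
  qed
qed

end
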